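(* Let $q$ be a prime power and let $C\subseteq\mathrm{GF}(q^m)^n$ be a (linear or nonlinear) code with $n\le m$, $|C|=q^{mk}$ for an integer $1\le k\le n$, and minimum rank distance $d_{\mathrm R}=n-k+1$. Let $\mathcal K$ be any elementary linear subspace of $\mathrm{GF}(q^m)^n$ of dimension $k$ and $\bar{\mathcal K}$ any elementary linear subspace of dimension $n-k$ with $\mathcal K\oplus\bar{\mathcal K}=\mathrm{GF}(q^m)^n$. Then for every $\mathbf w\in\mathcal K$ there exists a unique codeword $\mathbf c\in C$ with $\mathbf c_{\mathcal K}=\mathbf w$, where $\mathbf c_{\mathcal K}$ denotes the projection of $\mathbf c$ onto $\mathcal K$ along $\bar{\mathcal K}$.
   Context: For $\mathbf x=(x_0,\dots,x_{n-1})\in\mathrm{GF}(q^m)^n$, $\mathrm{rk}(\mathbf x)$ is the dimension over $\mathrm{GF}(q)$ of the $\mathrm{GF}(q)$-span of $x_0,\dots,x_{n-1}$; the minimum rank distance of $C$ is the minimum of $\mathrm{rk}(\mathbf c-\mathbf d)$ over distinct codewords. A linear subspace of the $\mathrm{GF}(q^m)$-vector space $\mathrm{GF}(q^m)^n$ is elementary if it has a basis consisting of vectors in $\mathrm{GF}(q)^n$. The projection of $\mathbf x$ onto $\mathcal K$ along $\bar{\mathcal K}$ is the unique $\mathbf x_{\mathcal K}\in\mathcal K$ with $\mathbf x-\mathbf x_{\mathcal K}\in\bar{\mathcal K}$. *)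

theory Defs
  imports "HOL-Analysis.Analysis"
begin

text \<open>GF(q) is modelled by a finite field type 'b, GF(q^m) by a finite field type 'a,
  and 'b is embedded in 'a via an injective ring homomorphism emb.
  GF(q^m) is a vector space over GF(q) with scalar multiplication (\<lambda>c x. emb c * x).\<close>

definition field_emb :: "('b::field \<Rightarrow> 'a::field) \<Rightarrow> bool" where
  "field_emb emb \<longleftrightarrow> inj emb \<and> emb 1 = 1 \<and>
     (\<forall>x y. emb (x + y) = emb x + emb y) \<and> (\<forall>x y. emb (x * y) = emb x * emb y)"

definition rk :: "('b::field \<Rightarrow> 'a::field) \<Rightarrow> 'a ^ 'n \<Rightarrow> nat" where
  "rk emb x = vector_space.dim (\<lambda>c y. emb c * y) (range (\<lambda>i. x $ i))"

definition min_rank_dist :: "('b::field \<Rightarrow> 'a::field) \<Rightarrow> ('a ^ 'n) set \<Rightarrow> nat" where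
  "min_rank_dist emb C = Min {rk emb (c - d) | c d. c \<in> C \<and> d \<in> C \<and> c \<noteq> d}"

definition elementary :: "('b::field \<Rightarrow> 'a::field) \<Rightarrow> ('a ^ 'n) set \<Rightarrow> bool" where
  "elementary emb U \<longleftrightarrow> vec.subspace U \<and>
     (\<exists>B. B \<subseteq> {v. \<forall>i. v $ i \<in> range emb} \<and> vec.independent B \<and> vec.span B = U)"

definition proj :: "('a::field ^ 'n) set \<Rightarrow> ('a ^ 'n) set \<Rightarrow> 'a ^ 'n \<Rightarrow> 'a ^ 'n" where
  "proj K Kbar x = (THE y. y \<in> K \<and> x - y \<in> Kbar)"

end

theory Submission
  imports Defs
begin

text \<open>If two codewords had the same projection onto \<open>K\<close>, their difference would lie in the
  elementary space \<open>Kbar\<close> of dimension \<open>n - k\<close>. Every vector of an elementary space of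
  dimension \<open>r\<close> has rank at most \<open>r\<close>, since its entries are \<open>GF(q)\<close>-combinations of the
  \<open>r\<close> coordinates with respect to a basis in \<open>GF(q)\<^sup>n\<close>. This contradicts
  \<open>d\<^sub>R = n - k + 1\<close>, so projection is injective on \<open>C\<close>; as \<open>|C| = q\<^sup>m\<^sup>k \<ge> |K|\<close>, it is a
  bijection onto \<open>K\<close>.\<close>

lemma vector_space_field_emb:
  assumes "field_emb emb"
  shows "vector_space (\<lambda>c (y::'a::field). (emb::'b::field \<Rightarrow> 'a) c * y)"
  using assms unfolding field_emb_def
  by unfold_locales (auto simp: algebra_simps)

lemma card_vec_span_le:
  fixes B :: "('a::{field,finite} ^ 'n) set"
  shows "card (vec.span B) \<le> CARD('a) ^ card B"
proof -
  let ?comb = "\<lambda>u. \<Sum>v\<in>B. u v *s v"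
  have fin: "finite B" by simp
  have "vec.span B \<subseteq> ?comb ` (B \<rightarrow>\<^sub>E UNIV)"
  proof
    fix x assume "x \<in> vec.span B"
    then obtain u where x: "x = ?comb u"
      using vec.span_finite[OF fin] by auto
    have "x = ?comb (restrict u B)" unfolding x by (rule sum.cong) auto
    moreover have "restrict u B \<in> B \<rightarrow>\<^sub>E UNIV" by simp
    ultimately show "x \<in> ?comb ` (B \<rightarrow>\<^sub>E UNIV)" by (rule image_eqI)
  qed
  then have "card (vec.span B) \<le> card (?comb ` (B \<rightarrow>\<^sub>E (UNIV::'a set)))"
    by (intro card_mono) auto
  also have "\<dots> \<le> card (B \<rightarrow>\<^sub>E (UNIV::'a set))"
    by (rule card_image_le) (simp add: finite_PiE fin)
  also have "\<dots> = CARD('a) ^ card B" by (simp add: card_PiE fin)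
  finally show ?thesis .
qed

lemma card_le_CARD_pow_vec_dim:
  fixes U :: "('a::{field,finite} ^ 'n) set"
  shows "card U \<le> CARD('a) ^ vec.dim U"
proof -
  obtain B where "U \<subseteq> vec.span B" "card B = vec.dim U"
    using vec.basis_exists[of U] by metis
  then show ?thesis
    using card_mono[of "vec.span B" U] card_vec_span_le[of B] by simp
qed

lemma rk_le_dim_elementary:
  fixes emb :: "'b::{field,finite} \<Rightarrow> 'a::{field,finite}" and U :: "('a ^ 'n) set"
  assumes emb: "field_emb emb" and U: "elementary emb U" and x: "x \<in> U"
  shows "rk emb x \<le> vec.dim U"
proof -
  interpret F: vector_space "\<lambda>c (y::'a). emb c * y" by (rule vector_space_field_emb[OF emb])
  obtain B where B: "B \<subseteq> {v. \<forall>i. v $ i \<in> range emb}" "vec.independent B" "vec.span B = U"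
    using U unfolding elementary_def by auto
  obtain u where xu: "x = (\<Sum>v\<in>B. u v *s v)"
    using vec.span_finite[of B] x B(3) by auto
  have "range (\<lambda>i. x $ i) \<subseteq> F.span (u ` B)"
  proof safe
    fix i
    have "\<forall>v\<in>B. \<exists>e. v $ i = emb e" using B(1) by auto
    then obtain e where e: "\<And>v. v \<in> B \<Longrightarrow> v $ i = emb (e v)" by metis
    have "x $ i = (\<Sum>v\<in>B. emb (e v) * u v)"
      unfolding xu sum_component by (auto intro: sum.cong simp: e)
    also have "\<dots> \<in> F.span (u ` B)"
      by (intro F.span_sum F.span_scale F.span_base) auto
    finally show "x $ i \<in> F.span (u ` B)" .
  qed
  then have "rk emb x \<le> card (u ` B)"
    unfolding rk_def by (intro F.dim_le_card) auto
  also have "\<dots> \<le> card B" by (rule card_image_le) simp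
  also have "\<dots> = vec.dim U"
    using B vec.dim_span_eq_card_independent by metis
  finally show ?thesis .
qed

lemma min_rank_dist_le_rk:
  fixes C :: "('a::{field,finite} ^ 'n) set"
  assumes "c \<in> C" "d \<in> C" "c \<noteq> d"
  shows "min_rank_dist emb C \<le> rk emb (c - d)"
proof -
  have "{rk emb (c - d) |c d. c \<in> C \<and> d \<in> C \<and> c \<noteq> d} \<subseteq> range (rk emb :: 'a ^ 'n \<Rightarrow> nat)"
    by auto
  then have "finite {rk emb (c - d) |c d. c \<in> C \<and> d \<in> C \<and> c \<noteq> d}"
    by (rule finite_subset) simp
  then show ?thesis
    unfolding min_rank_dist_def using assms by (intro Min_le) blast+
qed

lemma proj_direct_sum:
  fixes K Kbar :: "('a::field ^ 'n) set"
  assumes "vec.subspace K" "vec.subspace Kbar"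
    and "K \<inter> Kbar = {0}" "{x + y | x y. x \<in> K \<and> y \<in> Kbar} = UNIV"
  shows "proj K Kbar x \<in> K" "x - proj K Kbar x \<in> Kbar"
proof -
  obtain a b where ab: "x = a + b" "a \<in> K" "b \<in> Kbar" using assms(4) by blast
  have "\<exists>!y. y \<in> K \<and> x - y \<in> Kbar"
  proof (rule ex1I[of _ a])
    show "a \<in> K \<and> x - a \<in> Kbar" using ab by simp
  next
    fix y assume y: "y \<in> K \<and> x - y \<in> Kbar"
    have "y - a \<in> K" using y ab assms(1) by (simp add: vec.subspace_diff)
    moreover have "b - (x - y) \<in> Kbar"
      using vec.subspace_diff[OF assms(2)] y ab(3) by blast
    then have "y - a \<in> Kbar" using ab(1) by (simp add: algebra_simps)
    ultimately have "y - a \<in> K \<inter> Kbar" by blast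
    then show "y = a" using assms(3) by simp
  qed
  then have "proj K Kbar x \<in> K \<and> x - proj K Kbar x \<in> Kbar"
    unfolding proj_def by (rule theI')
  then show "proj K Kbar x \<in> K" "x - proj K Kbar x \<in> Kbar" by auto
qed

lemma inj_on_proj_if_dim_less_min_rank_dist:
  fixes emb :: "'b::{field,finite} \<Rightarrow> 'a::{field,finite}" and C K Kbar :: "('a ^ 'n) set"
  assumes emb: "field_emb emb" and K: "vec.subspace K" and Kbar: "elementary emb Kbar"
    and dsum: "K \<inter> Kbar = {0}" "{x + y | x y. x \<in> K \<and> y \<in> Kbar} = UNIV"
    and dR: "vec.dim Kbar < min_rank_dist emb C"
  shows "inj_on (proj K Kbar) C"
proof (rule inj_onI, rule ccontr)
  fix c d assume cd: "c \<in> C" "d \<in> C" "proj K Kbar c = proj K Kbar d" "c \<noteq> d"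
  have Kbar_sub: "vec.subspace Kbar" using Kbar unfolding elementary_def by simp
  note proj = proj_direct_sum[OF K Kbar_sub dsum]
  have "c - d = (c - proj K Kbar c) - (d - proj K Kbar d)" using cd(3) by simp
  also have "\<dots> \<in> Kbar" by (rule vec.subspace_diff[OF Kbar_sub proj(2) proj(2)])
  finally have "rk emb (c - d) \<le> vec.dim Kbar"
    by (rule rk_le_dim_elementary[OF emb Kbar])
  moreover have "min_rank_dist emb C \<le> rk emb (c - d)"
    by (rule min_rank_dist_le_rk[OF cd(1,2,4)])
  ultimately show False using dR by linarith
qed

lemma ex1_preimage_if_inj_on_card_le:
  assumes "inj_on f C" "f ` C \<subseteq> K" "card K \<le> card C" "finite K"
  shows "\<forall>w \<in> K. \<exists>!c. c \<in> C \<and> f c = w"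
proof -
  have "card (f ` C) = card C" using assms(1) by (rule card_image)
  also have "\<dots> = card K"
    using assms(3) card_mono[OF assms(4,2)] \<open>card (f ` C) = card C\<close> by linarith
  finally have "f ` C = K" using assms(2,4) by (intro card_subset_eq) auto
  with assms(1) show ?thesis by (auto dest: inj_onD)
qed

theorem lemma5:
  fixes emb :: "'b::{field,finite} \<Rightarrow> 'a::{field,finite}"
    and C K Kbar :: "('a ^ 'n) set"
    and q m k :: nat
  assumes emb: "field_emb emb"
    and q: "CARD('b) = q" and qm: "CARD('a) = q ^ m"
    and nm: "CARD('n) \<le> m"
    and k: "1 \<le> k" "k \<le> CARD('n)"
    and Csize: "card C = q ^ (m * k)"
    and dR: "min_rank_dist emb C = CARD('n) - k + 1"
    and K: "elementary emb K" "vec.dim K = k"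
    and Kbar: "elementary emb Kbar" "vec.dim Kbar = CARD('n) - k"
    and dsum: "K \<inter> Kbar = {0}" "{x + y | x y. x \<in> K \<and> y \<in> Kbar} = UNIV"
  shows "\<forall>w \<in> K. \<exists>!c. c \<in> C \<and> proj K Kbar c = w"
proof -
  have K_sub: "vec.subspace K" and Kbar_sub: "vec.subspace Kbar"
    using K(1) Kbar(1) unfolding elementary_def by auto
  have "inj_on (proj K Kbar) C"
    using inj_on_proj_if_dim_less_min_rank_dist[OF emb K_sub Kbar(1) dsum] dR Kbar(2) by simp
  moreover have "proj K Kbar ` C \<subseteq> K"
    using proj_direct_sum[OF K_sub Kbar_sub dsum] by auto
  moreover have "card K \<le> card C"
    using card_le_CARD_pow_vec_dim[of K] K(2) qm Csize by (simp add: power_mult)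
  ultimately show ?thesis
    by (rule ex1_preimage_if_inj_on_card_le) simp
qed

end
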